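(* Let $\mathcal{P}=\{\mathbb{P}_n\}_{n\ge1}$ ($\mathbb{P}_n$ on $\mathbb{R}^n$) be a family of probability measures which is dominated by a family of (possibly scaled) standard normal distributions, i.e. by a family $\{\mathbb{P}'_n\}$ where $\mathbb{P}'_n$ is the law of $s_n Z_n$ with $Z_n$ standard normal in $\mathbb{R}^n$ and $s_n>0$. Then $\mathcal{P}$ has exponential Fisher separability.
   Context: $\{\mathbb{P}'_n\}$ dominates $\{\mathbb{P}_n\}$ if there is a constant $C$ such that $\mathbb{P}_n(S)\le C\,\mathbb{P}'_n(S)$ for all $n$ and all measurable $S\subset\mathbb{R}^n$. A family $\{\mathbb{P}_n\}$ has exponential Fisher separability if there exist constants $a>0$, $b\in(0,1)$ such that for all $n$, if $\boldsymbol{x},\boldsymbol{y}$ are i.i.d. with law $\mathbb{P}_n$, then $(\boldsymbol{x},\boldsymbol{x})>(\boldsymbol{x},\boldsymbol{y})$ with probability at least $1-ab^n$ ($(\cdot,\cdot)$ the Euclidean inner product). *)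

theory Defs
  imports "HOL-Probability.Probability"
begin

text \<open>R^n is represented as the product measurable space of functions on the
index set {..<n} (extensional outside), with the Borel sigma-algebra.\<close>

definition euclid_space :: "nat \<Rightarrow> (nat \<Rightarrow> real) measure" where
  "euclid_space n = PiM {..<n} (\<lambda>_. lborel)"

definition ip :: "nat \<Rightarrow> (nat \<Rightarrow> real) \<Rightarrow> (nat \<Rightarrow> real) \<Rightarrow> real" where
  "ip n x y = (\<Sum>i<n. x i * y i)"

definition std_gauss :: "nat \<Rightarrow> (nat \<Rightarrow> real) measure" where
  "std_gauss n = PiM {..<n} (\<lambda>_. density lborel std_normal_density)"

definition scaled_gauss :: "real \<Rightarrow> nat \<Rightarrow> (nat \<Rightarrow> real) measure" where
  "scaled_gauss s n = distr (std_gauss n) (euclid_space n) (\<lambda>x. restrict (\<lambda>i. s * x i) {..<n})"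

definition dominates ::
  "(nat \<Rightarrow> (nat \<Rightarrow> real) measure) \<Rightarrow> (nat \<Rightarrow> (nat \<Rightarrow> real) measure) \<Rightarrow> bool" where
  "dominates P' P \<longleftrightarrow> (\<exists>C. \<forall>n\<ge>1. \<forall>S \<in> sets (euclid_space n).
      measure (P n) S \<le> C * measure (P' n) S)"

definition exp_fisher_separable :: "(nat \<Rightarrow> (nat \<Rightarrow> real) measure) \<Rightarrow> bool" where
  "exp_fisher_separable P \<longleftrightarrow> (\<exists>a b. a > 0 \<and> 0 < b \<and> b < 1 \<and> (\<forall>n\<ge>1.
      measure (P n \<Otimes>\<^sub>M P n) {(x, y) \<in> space (P n \<Otimes>\<^sub>M P n). ip n x x > ip n x y}
        \<ge> 1 - a * b ^ n))"

end

theory Submission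
  imports Defs
begin

text \<open>The event \<open>x \<bullet> x \<le> x \<bullet> y\<close> is invariant under scaling both vectors by \<open>s \<noteq> 0\<close>, so under the
  product of scaled Gaussians it has the same probability as under the product of standard Gaussians.
  There the Chernoff bound \<open>1[x \<bullet> x \<le> x \<bullet> y] \<le> exp (x \<bullet> y - x \<bullet> x)\<close> and the Gaussian moment
  generating function, applied first in \<open>y\<close> and then in \<open>x\<close>, bound it by
  \<open>E exp (- |x|\<^sup>2 / 2) = (1 / sqrt 2) ^ n\<close>. Domination with constant \<open>C\<close> passes to the
  product measures with constant \<open>C\<^sup>2\<close>, which gives the failure probability \<open>C\<^sup>2 (1 / sqrt 2) ^ n\<close>
  under \<open>P n \<Otimes> P n\<close>.\<close>

lemma nn_integral_normal_density:
  "s > 0 \<Longrightarrow> (\<integral>\<^sup>+x. ennreal (normal_density m s x) \<partial>lborel) = 1"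
  by (subst nn_integral_eq_integral) (auto intro: integrable_normal_density simp: integral_normal_density)

lemma nn_integral_std_normal_exp_linear:
  "(\<integral>\<^sup>+y. ennreal (exp (c * y)) \<partial>density lborel std_normal_density) = ennreal (exp (c\<^sup>2 / 2))"
proof -
  have completed_square: "std_normal_density y * exp (c * y) = exp (c\<^sup>2 / 2) * normal_density c 1 y" for y
  proof -
    have "exp (- y\<^sup>2 / 2) * exp (c * y) = exp (c\<^sup>2 / 2) * exp (- (y - c)\<^sup>2 / 2)"
      unfolding mult_exp_exp by (rule arg_cong[where f = exp]) (simp add: power2_eq_square field_simps)
    then show ?thesis by (simp add: std_normal_density_def normal_density_def)
  qed
  have "(\<integral>\<^sup>+y. ennreal (exp (c * y)) \<partial>density lborel std_normal_density)
      = (\<integral>\<^sup>+y. ennreal (exp (c\<^sup>2 / 2)) * ennreal (normal_density c 1 y) \<partial>lborel)"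
    by (subst nn_integral_density) (auto simp: ennreal_mult'[symmetric] completed_square)
  also have "\<dots> = ennreal (exp (c\<^sup>2 / 2))"
    by (subst nn_integral_cmult) (auto simp: nn_integral_normal_density)
  finally show ?thesis .
qed

lemma nn_integral_std_normal_exp_neg_square:
  "(\<integral>\<^sup>+x. ennreal (exp (- x\<^sup>2 / 2)) \<partial>density lborel std_normal_density) = ennreal (1 / sqrt 2)"
proof -
  have halved_variance: "std_normal_density x * exp (- (x\<^sup>2 / 2)) = normal_density 0 (sqrt (1 / 2)) x / sqrt 2" for x
  proof -
    have "exp (- x\<^sup>2 / 2) * exp (- x\<^sup>2 / 2) = exp (- x\<^sup>2)"
      unfolding mult_exp_exp by simp
    moreover have "sqrt (2 * pi) = sqrt 2 * sqrt pi" by (simp add: real_sqrt_mult)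
    ultimately show ?thesis by (simp add: std_normal_density_def normal_density_def)
  qed
  have "(\<integral>\<^sup>+x. ennreal (exp (- x\<^sup>2 / 2)) \<partial>density lborel std_normal_density)
      = (\<integral>\<^sup>+x. ennreal (1 / sqrt 2) * ennreal (normal_density 0 (sqrt (1 / 2)) x) \<partial>lborel)"
    by (subst nn_integral_density) (auto simp: ennreal_mult'[symmetric] halved_variance)
  also have "\<dots> = ennreal (1 / sqrt 2)"
    by (subst nn_integral_cmult) (auto simp: nn_integral_normal_density)
  finally show ?thesis .
qed

lemma prob_space_std_gauss: "prob_space (std_gauss n)"
  unfolding std_gauss_def by (intro prob_space_PiM prob_space_normal_density) simp

lemma sets_std_gauss [measurable_cong]: "sets (std_gauss n) = sets (euclid_space n)"
  unfolding std_gauss_def euclid_space_def by (intro sets_PiM_cong) auto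

lemma measurable_ip [measurable]:
  assumes "f \<in> M \<rightarrow>\<^sub>M euclid_space n" and "g \<in> M \<rightarrow>\<^sub>M euclid_space n"
  shows "(\<lambda>p. ip n (f p) (g p)) \<in> borel_measurable M"
  unfolding ip_def
proof (intro borel_measurable_sum borel_measurable_times)
  fix i assume "i \<in> {..<n}"
  then have "(\<lambda>x. x i) \<in> euclid_space n \<rightarrow>\<^sub>M borel"
    unfolding euclid_space_def by (simp add: measurable_component_singleton)
  then show "(\<lambda>p. f p i) \<in> borel_measurable M" "(\<lambda>p. g p i) \<in> borel_measurable M"
    using measurable_comp[OF assms(1)] measurable_comp[OF assms(2)] by (simp_all add: o_def)
qed

lemma nn_integral_std_gauss_exp_ip:
  "(\<integral>\<^sup>+y. ennreal (exp (ip n x y - ip n x x)) \<partial>std_gauss n) = (\<Prod>i<n. ennreal (exp (- (x i)\<^sup>2 / 2)))"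
proof -
  let ?N = "density lborel std_normal_density"
  interpret product_sigma_finite "\<lambda>_. ?N"
    unfolding product_sigma_finite_def
    using prob_space_normal_density[of 1 0] prob_space_imp_sigma_finite by auto
  have "exp (ip n x y - ip n x x) = (\<Prod>i<n. exp (x i * y i) * exp (- (x i)\<^sup>2))" for y
    unfolding ip_def by (simp add: exp_sum[symmetric] sum_subtractf mult_exp_exp power2_eq_square)
  then have "(\<integral>\<^sup>+y. ennreal (exp (ip n x y - ip n x x)) \<partial>std_gauss n)
      = (\<integral>\<^sup>+y. (\<Prod>i<n. (\<lambda>t. ennreal (exp (x i * t) * exp (- (x i)\<^sup>2))) (y i)) \<partial>PiM {..<n} (\<lambda>_. ?N))"
    by (simp add: std_gauss_def prod_ennreal)
  also have "\<dots> = (\<Prod>i<n. \<integral>\<^sup>+t. ennreal (exp (x i * t) * exp (- (x i)\<^sup>2)) \<partial>?N)"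
    by (rule product_nn_integral_prod) auto
  also have "\<dots> = (\<Prod>i<n. ennreal (exp (- (x i)\<^sup>2 / 2)))"
  proof (rule prod.cong)
    fix i
    have "(\<integral>\<^sup>+t. ennreal (exp (x i * t) * exp (- (x i)\<^sup>2)) \<partial>?N)
        = ennreal (exp (- (x i)\<^sup>2)) * (\<integral>\<^sup>+t. ennreal (exp (x i * t)) \<partial>?N)"
      by (subst nn_integral_cmult[symmetric]) (auto simp: ennreal_mult' mult.commute)
    also have "\<dots> = ennreal (exp (- (x i)\<^sup>2 / 2))"
      by (simp add: nn_integral_std_normal_exp_linear ennreal_mult'[symmetric] mult_exp_exp)
    finally show "(\<integral>\<^sup>+t. ennreal (exp (x i * t) * exp (- (x i)\<^sup>2)) \<partial>?N) = ennreal (exp (- (x i)\<^sup>2 / 2))" .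
  qed simp
  finally show ?thesis .
qed

lemma nn_integral_std_gauss_pair_exp_ip:
  "(\<integral>\<^sup>+x. \<integral>\<^sup>+y. ennreal (exp (ip n x y - ip n x x)) \<partial>std_gauss n \<partial>std_gauss n) = ennreal ((1 / sqrt 2) ^ n)"
proof -
  let ?N = "density lborel std_normal_density"
  interpret product_sigma_finite "\<lambda>_. ?N"
    unfolding product_sigma_finite_def
    using prob_space_normal_density[of 1 0] prob_space_imp_sigma_finite by auto
  have "(\<integral>\<^sup>+x. \<integral>\<^sup>+y. ennreal (exp (ip n x y - ip n x x)) \<partial>std_gauss n \<partial>std_gauss n)
      = (\<integral>\<^sup>+x. (\<Prod>i<n. (\<lambda>t. ennreal (exp (- t\<^sup>2 / 2))) (x i)) \<partial>PiM {..<n} (\<lambda>_. ?N))"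
    unfolding nn_integral_std_gauss_exp_ip by (simp add: std_gauss_def)
  also have "\<dots> = (\<Prod>i<n. \<integral>\<^sup>+t. ennreal (exp (- t\<^sup>2 / 2)) \<partial>?N)"
    by (rule product_nn_integral_prod) auto
  also have "\<dots> = ennreal ((1 / sqrt 2) ^ n)"
    unfolding nn_integral_std_normal_exp_neg_square by (simp add: ennreal_power)
  finally show ?thesis .
qed

definition ip_unseparated :: "nat \<Rightarrow> ((nat \<Rightarrow> real) \<times> (nat \<Rightarrow> real)) set" where
  "ip_unseparated n = {(x, y) \<in> space (euclid_space n \<Otimes>\<^sub>M euclid_space n). ip n x x \<le> ip n x y}"

lemma ip_unseparated_in_sets [measurable]:
  "ip_unseparated n \<in> sets (euclid_space n \<Otimes>\<^sub>M euclid_space n)"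
proof -
  have "ip_unseparated n
      = {p \<in> space (euclid_space n \<Otimes>\<^sub>M euclid_space n). ip n (fst p) (fst p) \<le> ip n (fst p) (snd p)}"
    unfolding ip_unseparated_def by auto
  also have "\<dots> \<in> sets (euclid_space n \<Otimes>\<^sub>M euclid_space n)"
    by measurable
  finally show ?thesis .
qed

lemma emeasure_std_gauss_ip_unseparated:
  "emeasure (std_gauss n \<Otimes>\<^sub>M std_gauss n) (ip_unseparated n) \<le> ennreal ((1 / sqrt 2) ^ n)"
proof -
  interpret G: prob_space "std_gauss n" by (rule prob_space_std_gauss)
  have chernoff: "indicator (ip_unseparated n) (x, y) \<le> ennreal (exp (ip n x y - ip n x x))" for x y
    by (cases "(x, y) \<in> ip_unseparated n") (auto simp: ip_unseparated_def)
  have "emeasure (std_gauss n \<Otimes>\<^sub>M std_gauss n) (ip_unseparated n)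
      = (\<integral>\<^sup>+x. \<integral>\<^sup>+y. indicator (ip_unseparated n) (x, y) \<partial>std_gauss n \<partial>std_gauss n)"
    by (rule G.emeasure_pair_measure) measurable
  also have "\<dots> \<le> (\<integral>\<^sup>+x. \<integral>\<^sup>+y. ennreal (exp (ip n x y - ip n x x)) \<partial>std_gauss n \<partial>std_gauss n)"
    by (intro nn_integral_mono chernoff)
  also have "\<dots> = ennreal ((1 / sqrt 2) ^ n)"
    by (rule nn_integral_std_gauss_pair_exp_ip)
  finally show ?thesis .
qed

lemma measurable_scale_euclid [measurable]:
  "(\<lambda>x. restrict (\<lambda>i. s * x i) {..<n}) \<in> euclid_space n \<rightarrow>\<^sub>M euclid_space n"
  unfolding euclid_space_def
  by (intro measurable_restrict borel_measurable_times measurable_const measurable_component_singleton) auto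

lemma sets_scaled_gauss [measurable_cong]: "sets (scaled_gauss s n) = sets (euclid_space n)"
  by (simp add: scaled_gauss_def)

lemma prob_space_scaled_gauss: "prob_space (scaled_gauss s n)"
  unfolding scaled_gauss_def
  by (intro prob_space.prob_space_distr prob_space_std_gauss) measurable

lemma emeasure_scaled_gauss_ip_unseparated:
  assumes "s \<noteq> 0"
  shows "emeasure (scaled_gauss s n \<Otimes>\<^sub>M scaled_gauss s n) (ip_unseparated n)
    = emeasure (std_gauss n \<Otimes>\<^sub>M std_gauss n) (ip_unseparated n)"
proof -
  define sc where "sc = (\<lambda>x::nat \<Rightarrow> real. restrict (\<lambda>i. s * x i) {..<n})"
  have sc [measurable]: "sc \<in> std_gauss n \<rightarrow>\<^sub>M euclid_space n"
    unfolding sc_def by measurable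
  have ip_sc: "ip n (sc x) (sc y) = s\<^sup>2 * ip n x y" for x y
    unfolding ip_def sc_def by (simp add: sum_distrib_left power2_eq_square mult_ac)
  have scale_invariant: "(\<lambda>(x, y). (sc x, sc y)) -` ip_unseparated n \<inter> space (std_gauss n \<Otimes>\<^sub>M std_gauss n)
      = ip_unseparated n"
  proof -
    have "sc x \<in> space (euclid_space n)" for x
      by (simp add: sc_def euclid_space_def space_PiM)
    moreover have "ip n (sc x) (sc x) \<le> ip n (sc x) (sc y) \<longleftrightarrow> ip n x x \<le> ip n x y" for x y
      using assms by (simp add: ip_sc)
    moreover have "space (std_gauss n \<Otimes>\<^sub>M std_gauss n) = space (euclid_space n \<Otimes>\<^sub>M euclid_space n)"
      by (simp add: space_pair_measure sets_eq_imp_space_eq[OF sets_std_gauss])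
    ultimately show ?thesis
      by (auto simp: ip_unseparated_def space_pair_measure)
  qed
  have law: "scaled_gauss s n = distr (std_gauss n) (euclid_space n) sc"
    unfolding scaled_gauss_def sc_def ..
  have "scaled_gauss s n \<Otimes>\<^sub>M scaled_gauss s n
      = distr (std_gauss n \<Otimes>\<^sub>M std_gauss n) (euclid_space n \<Otimes>\<^sub>M euclid_space n) (\<lambda>(x, y). (sc x, sc y))"
    unfolding law
    by (intro pair_measure_distr sc prob_space_imp_sigma_finite prob_space_scaled_gauss[of s n, unfolded law])
  then show ?thesis
    by (simp add: emeasure_distr scale_invariant)
qed

lemma nn_integral_le_if_measure_le:
  assumes sets: "sets M = sets N" and "finite_measure M" "finite_measure N" and "C \<ge> 0"
    and dominated: "\<And>A. A \<in> sets N \<Longrightarrow> measure M A \<le> C * measure N A"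
    and f: "f \<in> borel_measurable N"
  shows "nn_integral M f \<le> ennreal C * nn_integral N f"
proof -
  interpret M: finite_measure M by fact
  interpret N: finite_measure N by fact
  have "emeasure M A \<le> ennreal C * emeasure N A" for A
  proof (cases "A \<in> sets N")
    case True
    then have "ennreal (measure M A) \<le> ennreal (C * measure N A)"
      by (intro ennreal_leI dominated)
    with \<open>C \<ge> 0\<close> show ?thesis
      by (simp add: M.emeasure_eq_measure N.emeasure_eq_measure ennreal_mult)
  next
    case False
    then show ?thesis using sets by (simp add: emeasure_notin_sets)
  qed
  then have "M \<le> scale_measure (ennreal C) N"
    by (simp add: le_measure_iff space_scale_measure sets_eq_imp_space_eq[OF sets] sets le_fun_def)
  then have "nn_integral M f \<le> nn_integral (scale_measure (ennreal C) N) f"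
    by (intro nn_integral_mono_measure) (simp add: sets)
  also have "\<dots> = ennreal C * nn_integral N f"
    using f by (rule nn_integral_scale_measure)
  finally show ?thesis .
qed

lemma emeasure_pair_measure_le_if_measure_le:
  assumes sets: "sets M = sets N" and "finite_measure M" "finite_measure N" and "C \<ge> 0"
    and dominated: "\<And>A. A \<in> sets N \<Longrightarrow> measure M A \<le> C * measure N A"
    and F: "F \<in> sets (N \<Otimes>\<^sub>M N)"
  shows "emeasure (M \<Otimes>\<^sub>M M) F \<le> ennreal (C\<^sup>2) * emeasure (N \<Otimes>\<^sub>M N) F"
proof -
  interpret M: finite_measure M by fact
  interpret N: finite_measure N by fact
  note dominated_integral = nn_integral_le_if_measure_le[OF sets \<open>finite_measure M\<close> \<open>finite_measure N\<close> \<open>C \<ge> 0\<close> dominated]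
  have F_M: "F \<in> sets (M \<Otimes>\<^sub>M M)"
    using F by (simp add: sets_pair_measure_cong[OF sets sets])
  have measurable_section: "(\<lambda>y. indicator F (x, y)) \<in> borel_measurable N" if "x \<in> space M" for x
    using F that sets_eq_imp_space_eq[OF sets] by (intro measurable_Pair2[where f = "indicator F"]) simp_all
  have inner: "(\<lambda>x. \<integral>\<^sup>+y. indicator F (x, y) \<partial>N) \<in> borel_measurable N"
    using F by (intro N.borel_measurable_nn_integral_fst) simp
  have "emeasure (M \<Otimes>\<^sub>M M) F = (\<integral>\<^sup>+x. \<integral>\<^sup>+y. indicator F (x, y) \<partial>M \<partial>M)"
    using F_M by (rule M.emeasure_pair_measure)
  also have "\<dots> \<le> (\<integral>\<^sup>+x. ennreal C * \<integral>\<^sup>+y. indicator F (x, y) \<partial>N \<partial>M)"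
    by (intro nn_integral_mono dominated_integral measurable_section)
  also have "\<dots> = ennreal C * (\<integral>\<^sup>+x. \<integral>\<^sup>+y. indicator F (x, y) \<partial>N \<partial>M)"
    using inner by (intro nn_integral_cmult) (simp add: measurable_cong_sets[OF sets refl])
  also have "\<dots> \<le> ennreal C * (ennreal C * (\<integral>\<^sup>+x. \<integral>\<^sup>+y. indicator F (x, y) \<partial>N \<partial>N))"
    by (intro mult_left_mono dominated_integral inner) simp_all
  also have "\<dots> = ennreal (C\<^sup>2) * emeasure (N \<Otimes>\<^sub>M N) F"
    using \<open>C \<ge> 0\<close> F by (simp add: N.emeasure_pair_measure power2_eq_square ennreal_mult mult.assoc)
  finally show ?thesis .
qed

lemma prob_ip_separated_ge_if_dominated:
  assumes "prob_space M" and sets_M: "sets M = sets (euclid_space n)" and "s \<noteq> 0" and "C \<ge> 0"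
    and dominated: "\<And>A. A \<in> sets (euclid_space n) \<Longrightarrow> measure M A \<le> C * measure (scaled_gauss s n) A"
  shows "measure (M \<Otimes>\<^sub>M M) {(x, y) \<in> space (M \<Otimes>\<^sub>M M). ip n x x > ip n x y} \<ge> 1 - C\<^sup>2 * (1 / sqrt 2) ^ n"
proof -
  interpret M: prob_space M by fact
  interpret MM: prob_space "M \<Otimes>\<^sub>M M" by (intro prob_space_pair M.prob_space_axioms)
  interpret Q: prob_space "scaled_gauss s n" by (rule prob_space_scaled_gauss)
  have sets_MM: "sets (M \<Otimes>\<^sub>M M) = sets (euclid_space n \<Otimes>\<^sub>M euclid_space n)"
    by (intro sets_pair_measure_cong sets_M)
  then have unseparated_MM: "ip_unseparated n \<in> sets (M \<Otimes>\<^sub>M M)"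
    by simp
  have separated: "{(x, y) \<in> space (M \<Otimes>\<^sub>M M). ip n x x > ip n x y} = space (M \<Otimes>\<^sub>M M) - ip_unseparated n"
    by (auto simp: ip_unseparated_def sets_eq_imp_space_eq[OF sets_MM])
  have "emeasure (M \<Otimes>\<^sub>M M) (ip_unseparated n)
      \<le> ennreal (C\<^sup>2) * emeasure (scaled_gauss s n \<Otimes>\<^sub>M scaled_gauss s n) (ip_unseparated n)"
    using sets_M dominated \<open>C \<ge> 0\<close>
    by (intro emeasure_pair_measure_le_if_measure_le) (simp_all add: M.finite_measure_axioms Q.finite_measure_axioms sets_scaled_gauss)
  also have "\<dots> \<le> ennreal (C\<^sup>2) * ennreal ((1 / sqrt 2) ^ n)"
    unfolding emeasure_scaled_gauss_ip_unseparated[OF \<open>s \<noteq> 0\<close>]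
    by (intro mult_left_mono emeasure_std_gauss_ip_unseparated) simp_all
  finally have "MM.prob (ip_unseparated n) \<le> C\<^sup>2 * (1 / sqrt 2) ^ n"
    by (simp add: MM.emeasure_eq_measure ennreal_mult'[symmetric])
  then show ?thesis
    unfolding separated using MM.prob_compl[OF unseparated_MM] by simp
qed

theorem corollary5:
  fixes P :: "nat \<Rightarrow> (nat \<Rightarrow> real) measure" and s :: "nat \<Rightarrow> real"
  assumes "\<And>n. n \<ge> 1 \<Longrightarrow> prob_space (P n)"
    and "\<And>n. n \<ge> 1 \<Longrightarrow> sets (P n) = sets (euclid_space n)"
    and "\<And>n. n \<ge> 1 \<Longrightarrow> s n > 0"
    and "dominates (\<lambda>n. scaled_gauss (s n) n) P"
  shows "exp_fisher_separable P"
proof -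
  obtain C0 where C0: "\<And>n S. n \<ge> 1 \<Longrightarrow> S \<in> sets (euclid_space n)
      \<Longrightarrow> measure (P n) S \<le> C0 * measure (scaled_gauss (s n) n) S"
    using assms(4) unfolding dominates_def by blast
  define C where "C = max C0 1"
  have dominated: "measure (P n) S \<le> C * measure (scaled_gauss (s n) n) S"
    if "n \<ge> 1" "S \<in> sets (euclid_space n)" for n S
    using C0[OF that] mult_right_mono[OF max.cobounded1 measure_nonneg]
    unfolding C_def by (rule order_trans)
  have "measure (P n \<Otimes>\<^sub>M P n) {(x, y) \<in> space (P n \<Otimes>\<^sub>M P n). ip n x x > ip n x y}
      \<ge> 1 - C\<^sup>2 * (1 / sqrt 2) ^ n" if "n \<ge> 1" for n
    using assms(1-3)[OF that] dominated[OF that]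
    by (intro prob_ip_separated_ge_if_dominated[where s = "s n"]) (auto simp: C_def)
  moreover have "C\<^sup>2 > 0" "0 < 1 / sqrt (2::real)" "1 / sqrt (2::real) < 1"
    by (auto simp: C_def)
  ultimately show ?thesis
    unfolding exp_fisher_separable_def by blast
qed

end
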